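(* Consider $1$-private $5$-server HSS for $\mathsf{CONCAT}_4(\mathbb{F}_2)$. (i) There is an $\mathbb{F}_2$-linear such HSS whose $\mathsf{Share}$ is $1$-private $5$-party CNF sharing over $\mathbb{F}_2$ and in which each server's output share is a single bit (download cost $5$ bits). (ii) There is no $\mathbb{F}_2$-linear such HSS in which each of the $4$ secrets in $\mathbb{F}_2$ is shared independently by $1$-private $5$-party Shamir sharing over $\mathbb{E}=\mathbb{F}_8$ (for any choice of distinct evaluation points $\alpha_0,\dots,\alpha_5\in\mathbb{F}_8$) and in which each server's output share is a single bit.
   Context: $\mathsf{CONCAT}_\ell(\mathcal{X})$: the class consisting of the identity map $\mathcal{X}^\ell\to\mathcal{X}^\ell$, with $\ell$ inputs each shared independently. A $k$-server HSS $(\mathsf{Share},\mathsf{Eval},\mathsf{Rec})$: randomized $\mathsf{Share}$ splits each input into $k$ shares; server $j$ computes its output share from its input shares; $\mathsf{Rec}$ of the output shares recovers the output with probability 1; $1$-private if each single server's input shares are distributed independently of the input. $\mathbb{F}_2$-linear: $\mathsf{Share}$ is $\mathbb{F}_2$-linear in the input and uniform random bits, output shares are vectors over $\mathbb{F}_2$, and $\mathsf{Rec}$ is $\mathbb{F}_2$-linear. $1$-private $k$-party CNF sharing of $x\in\mathbb{F}_2$: uniform $x_1,\dots,x_k\in\mathbb{F}_2$ with $\sum_ix_i=x$, party $j$ gets $(x_i)_{i\ne j}$. $1$-private Shamir sharing over $\mathbb{E}\supseteq\mathbb{F}_2$ with distinct $\alpha_0,\dots,\alpha_k\in\mathbb{E}$: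 random $p\in\mathbb{E}[X]$ with $\deg p\le1$ and $p(\alpha_0)=x$; party $j$ gets $p(\alpha_j)$. *)

theory Defs
  imports Main "HOL-Library.Z2" "HOL-Library.Numeral_Type" "HOL-Library.Function_Algebras"
begin

text \<open>F_2 is the field type bit from HOL-Library.Z2; we record that it is finite
  (needed so that uniform randomness over functions into bit makes sense).\<close>

instance bit :: finite
proof
  have "(UNIV :: bit set) = {0, 1}" by (auto intro: bit.exhaust)
  then show "finite (UNIV :: bit set)" by (metis finite.emptyI finite.insertI)
qed

text \<open>Inputs are indexed by the finite type 'l, servers by the finite type 'k.
  A sharing of one secret is given by a function
    Share :: bit => 'r => 'k => 's,
  where the randomness 'r is uniform over the finite type 'r (an F_2-vector
  space, i.e. an abelian group of characteristic 2 such as bit-vectors or F_8),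
  and Share x r j is the share of server j.  The l inputs are shared
  independently (independent randomness rho i for input i).
  Eval j maps server j's shares of all l inputs to its output share, here a
  single bit; Rec maps the k output bits to the l output bits.\<close>

definition share_linear :: "(bit \<Rightarrow> 'r::ab_group_add \<Rightarrow> 'k \<Rightarrow> 's::ab_group_add) \<Rightarrow> bool" where
  "share_linear Share \<longleftrightarrow>
     (\<forall>x x' r r' j. Share (x + x') (r + r') j = Share x r j + Share x' r' j)"

definition rec_linear :: "(('k \<Rightarrow> bit) \<Rightarrow> ('l \<Rightarrow> bit)) \<Rightarrow> bool" where
  "rec_linear Rec \<longleftrightarrow>
     (\<forall>y y'. Rec (y + y') = Rec y + Rec y') \<and>
     (\<forall>c y. Rec (\<lambda>j. c * y j) = (\<lambda>i. c * Rec y i))"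

definition hss_correct ::
  "(bit \<Rightarrow> 'r \<Rightarrow> 'k \<Rightarrow> 's) \<Rightarrow> ('k \<Rightarrow> ('l \<Rightarrow> 's) \<Rightarrow> bit) \<Rightarrow> (('k \<Rightarrow> bit) \<Rightarrow> ('l \<Rightarrow> bit)) \<Rightarrow> bool" where
  "hss_correct Share Eval Rec \<longleftrightarrow>
     (\<forall>(x :: 'l \<Rightarrow> bit) (\<rho> :: 'l \<Rightarrow> 'r).
        Rec (\<lambda>j. Eval j (\<lambda>i. Share (x i) (\<rho> i) j)) = x)"

text \<open>1-privacy: for each single server j, the distribution of its input shares
  (over uniform randomness) does not depend on the input.\<close>
definition hss_private1 :: "(bit \<Rightarrow> 'r::finite \<Rightarrow> 'k \<Rightarrow> 's) \<Rightarrow> ('l::finite) itself \<Rightarrow> bool" where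
  "hss_private1 Share _ \<longleftrightarrow>
     (\<forall>j (x :: 'l \<Rightarrow> bit) (x' :: 'l \<Rightarrow> bit) (v :: 'l \<Rightarrow> 's).
        card {\<rho> :: 'l \<Rightarrow> 'r. (\<lambda>i. Share (x i) (\<rho> i) j) = v} =
        card {\<rho> :: 'l \<Rightarrow> 'r. (\<lambda>i. Share (x' i) (\<rho> i) j) = v})"

definition lin_hss ::
  "(bit \<Rightarrow> 'r::{finite,ab_group_add} \<Rightarrow> 'k::finite \<Rightarrow> 's::ab_group_add)
   \<Rightarrow> ('k \<Rightarrow> ('l::finite \<Rightarrow> 's) \<Rightarrow> bit) \<Rightarrow> (('k \<Rightarrow> bit) \<Rightarrow> ('l \<Rightarrow> bit)) \<Rightarrow> bool" where
  "lin_hss Share Eval Rec \<longleftrightarrow>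
     hss_private1 Share TYPE('l) \<and> share_linear Share \<and> rec_linear Rec \<and>
     hss_correct Share Eval Rec"

text \<open>The randomness r :: 'k => bit is
  uniform; the additive shares are x_t = r t for t \<noteq> t0 and
  x_t0 = x + sum_{t \<noteq> t0} r t (the bit r t0 is unused), so (x_t)_t is uniform
  among tuples summing to x.  Server j receives (x_t)_{t \<noteq> j}, encoded as the
  function with the j-th entry set to 0.\<close>
definition cnf_add_shares :: "bit \<Rightarrow> ('k::finite \<Rightarrow> bit) \<Rightarrow> 'k \<Rightarrow> bit" where
  "cnf_add_shares x r t =
     (if t = undefined then x + (\<Sum>t'\<in>UNIV - {undefined}. r t') else r t)"

definition cnf_share :: "bit \<Rightarrow> ('k::finite \<Rightarrow> bit) \<Rightarrow> 'k \<Rightarrow> ('k \<Rightarrow> bit)" where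
  "cnf_share x r j = (\<lambda>t. if t = j then 0 else cnf_add_shares x r t)"

text \<open>1-private Shamir sharing over a field 'e \<supseteq> F_2 with evaluation points
  \<alpha>0 (secret) and \<alpha> j (server j): p(X) = x + b (X - \<alpha>0) with b uniform in 'e,
  which is uniform among polynomials of degree \<le> 1 with p(\<alpha>0) = x.\<close>
definition shamir_share :: "'e::field \<Rightarrow> ('k \<Rightarrow> 'e) \<Rightarrow> bit \<Rightarrow> 'e \<Rightarrow> 'k \<Rightarrow> 'e" where
  "shamir_share \<alpha>0 \<alpha> x b j = of_bit x + b * (\<alpha> j - \<alpha>0)"

end

theory Submission
  imports Defs "HOL-Library.Cardinality" "HOL.Modules"
begin

text \<open>
  (i) Fix an injection e of the secrets into the servers and a spare server m outside its
  range. Server e i adds up all CNF shares of x_i it holds, i.e. x_i minus the single share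
  x_{i, e i} it lacks; every other server forwards its share x_{i', e i'} of each secret.
  So server e i outputs x_i + S and server m outputs S for the common mask
  S = \<Sum>_i x_{i, e i}, and x_i is the sum of two output bits.

  (ii) Dividing the Shamir randomness by \<alpha>_j - \<alpha>_0 puts the input of server j in the form
  b + \<delta>_j x with \<delta>_j = 1 / (\<alpha>_j - \<alpha>_0). A linear reconstruction from 5 bits onto 4 bits
  has a kernel {0, d}, and every vector of bits is an output vector plus a kernel element.
  If d_j = 0, output bit j could not depend on the randomness, hence would be constant,
  which is impossible; so d is the all-ones vector, and changing the randomness flips either
  no output bit or all of them. Hence all servers evaluate the same function H, and
  H(c + (\<delta>_j - \<delta>_0) x) - H(c) depends only on j and x. As F_8 has fewer than 2^4
  elements, two different sets T, T' of servers have the same sum of the \<delta>_j - \<delta>_0,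
  and then the nonzero linear form
  \<Sum>_{j \<in> T} (w_j + w_0) + \<Sum>_{j \<in> T'} (w_j + w_0) vanishes on the outputs and on the kernel,
  which together span all of F_2^5.
\<close>

declare add_bit_eq_xor [simp del] mult_bit_eq_and [simp del]

lemma bit_add_self [simp]: "(a::bit) + a = 0"
  by (cases a) simp_all

lemma bit_add_self_left [simp]: "(a::bit) + (a + b) = b"
  by (simp flip: add.assoc)

lemma card_bit [simp]: "CARD(bit) = 2"
proof -
  have "(UNIV :: bit set) = {0, 1}"
    by (auto intro: bit.exhaust)
  then show ?thesis
    by (metis card_2_iff zero_neq_one)
qed

lemma bit_add_eq_0_iff [simp]: "(a::bit) + b = 0 \<longleftrightarrow> a = b"
  by (cases a; cases b) simp_all

lemma bit_add_eq_iff: "(a::bit) + b = c \<longleftrightarrow> a = b + c"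
  by (cases a; cases b; cases c) simp_all

lemma card_eq_card_mult_card_kernel:
  fixes f :: "'a::{finite,ab_group_add} \<Rightarrow> 'b::{finite,ab_group_add}"
  assumes "additive f" and f_s: "\<And>y. f (s y) = y"
  shows "CARD('a) = CARD('b) * card {k. f k = 0}"
proof -
  interpret additive f by fact
  have "bij_betw (\<lambda>w. (f w, w - s (f w))) UNIV (UNIV \<times> {k. f k = 0})"
    by (rule bij_betw_byWitness[where f' = "\<lambda>(y, k). s y + k"]) (auto simp: diff add f_s)
  then show ?thesis
    by (simp add: bij_betw_same_card card_cartesian_product)
qed

lemma subset_sums_collide:
  fixes f :: "'a \<Rightarrow> 'b::{comm_monoid_add,finite}"
  assumes "finite A" and "CARD('b) < 2 ^ card A"
  obtains T T' where "T \<subseteq> A" "T' \<subseteq> A" "T \<noteq> T'" "sum f T = sum f T'"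
proof -
  have "card (sum f ` Pow A) < card (Pow A)"
    using card_mono[OF finite subset_UNIV, of "sum f ` Pow A"] assms by (simp add: card_Pow)
  then have "\<not> inj_on (sum f) (Pow A)"
    by (rule pigeonhole)
  then show ?thesis
    using that unfolding inj_on_def by blast
qed

lemma sum_fun_upd_add:
  fixes r :: "'a \<Rightarrow> 'b::comm_monoid_add"
  assumes "finite A" and "j \<in> A"
  shows "(\<Sum>t\<in>A. (r(j := r j + d)) t) = (\<Sum>t\<in>A. r t) + d"
proof -
  have "(\<Sum>t\<in>A. (r(j := r j + d)) t) = (\<Sum>t\<in>A. r t + (if t = j then d else 0))"
    by (rule sum.cong) auto
  also have "\<dots> = (\<Sum>t\<in>A. r t) + d"
    using assms by (simp add: sum.distrib)
  finally show ?thesis .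
qed

lemma hss_private1I:
  fixes Share :: "bit \<Rightarrow> 'r::finite \<Rightarrow> 'k \<Rightarrow> 's"
  assumes "\<And>j x x'. \<exists>\<sigma>. bij \<sigma> \<and> (\<forall>r. Share x (\<sigma> r) j = Share x' r j)"
  shows "hss_private1 Share TYPE('l::finite)"
  unfolding hss_private1_def
proof (intro allI)
  fix j and x x' :: "'l \<Rightarrow> bit" and v
  have "\<forall>i. \<exists>\<sigma>. bij \<sigma> \<and> (\<forall>r. Share (x i) (\<sigma> r) j = Share (x' i) r j)"
    using assms by blast
  then obtain \<sigma> where bij: "\<And>i. bij (\<sigma> i)" and shift: "\<And>i r. Share (x i) (\<sigma> i r) j = Share (x' i) r j"
    by metis
  have "bij_betw (\<lambda>\<rho> i. \<sigma> i (\<rho> i))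
      {\<rho>. (\<lambda>i. Share (x' i) (\<rho> i) j) = v} {\<rho>. (\<lambda>i. Share (x i) (\<rho> i) j) = v}"
  proof (rule bij_betw_byWitness[where f' = "\<lambda>\<rho> i. inv (\<sigma> i) (\<rho> i)"])
    have "inv (\<sigma> i) (\<sigma> i r) = r" "\<sigma> i (inv (\<sigma> i) r) = r" for i r
      using bij by (simp_all add: bij_is_inj bij_is_surj surj_f_inv_f)
    then show "(\<lambda>\<rho> i. \<sigma> i (\<rho> i)) ` {\<rho>. (\<lambda>i. Share (x' i) (\<rho> i) j) = v}
        \<subseteq> {\<rho>. (\<lambda>i. Share (x i) (\<rho> i) j) = v}"
      and "(\<lambda>\<rho> i. inv (\<sigma> i) (\<rho> i)) ` {\<rho>. (\<lambda>i. Share (x i) (\<rho> i) j) = v}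
        \<subseteq> {\<rho>. (\<lambda>i. Share (x' i) (\<rho> i) j) = v}"
      by (auto simp: shift simp flip: shift[of _ "inv (\<sigma> _) _"])
  qed (simp_all add: bij bij_is_inj bij_is_surj surj_f_inv_f)
  then show "card {\<rho>. (\<lambda>i. Share (x i) (\<rho> i) j) = v} = card {\<rho>. (\<lambda>i. Share (x' i) (\<rho> i) j) = v}"
    by (simp add: bij_betw_same_card)
qed

lemma sum_cnf_add_shares: "(\<Sum>t\<in>UNIV. cnf_add_shares x r t) = x"
proof -
  let ?u = "undefined :: 'k::finite"
  have "(\<Sum>t\<in>UNIV. cnf_add_shares x r t)
      = cnf_add_shares x r ?u + (\<Sum>t\<in>UNIV - {?u}. cnf_add_shares x r t)"
    by (rule sum.remove) auto
  also have "(\<Sum>t\<in>UNIV - {?u}. cnf_add_shares x r t) = (\<Sum>t\<in>UNIV - {?u}. r t)"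
    by (rule sum.cong) (auto simp: cnf_add_shares_def)
  finally show ?thesis
    by (simp add: cnf_add_shares_def add.assoc)
qed

lemma sum_cnf_share: "(\<Sum>t\<in>UNIV. cnf_share x r j t) = x + cnf_add_shares x r j"
proof -
  have "x = cnf_add_shares x r j + (\<Sum>t\<in>UNIV - {j}. cnf_add_shares x r t)"
    by (metis finite UNIV_I sum.remove sum_cnf_add_shares)
  also have "(\<Sum>t\<in>UNIV - {j}. cnf_add_shares x r t) = (\<Sum>t\<in>UNIV. cnf_share x r j t)"
    by (simp add: cnf_share_def sum.If_cases Compl_eq_Diff_UNIV[symmetric] Int_absorb1)
  finally show ?thesis
    by (metis add.commute bit_add_self_left)
qed

lemma cnf_share_shift: "cnf_share x (r(j := r j + (x + x'))) j = cnf_share x' r j"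
proof (rule ext)
  fix t
  show "cnf_share x (r(j := r j + (x + x'))) j t = cnf_share x' r j t"
  proof (cases "t = undefined \<and> t \<noteq> j")
    case True
    then have "(\<Sum>t\<in>UNIV - {undefined}. (r(j := r j + (x + x'))) t)
        = (\<Sum>t\<in>UNIV - {undefined}. r t) + (x + x')"
      by (intro sum_fun_upd_add) auto
    with True show ?thesis
      by (simp add: cnf_share_def cnf_add_shares_def ac_simps del: fun_upd_apply)
  next
    case False
    then show ?thesis
      by (cases "t = j") (simp_all add: cnf_share_def cnf_add_shares_def)
  qed
qed

lemma cnf_share_private: "hss_private1 (cnf_share :: bit \<Rightarrow> ('k::finite \<Rightarrow> bit) \<Rightarrow> _) TYPE('l::finite)"
proof (rule hss_private1I)
  fix j :: 'k and x x' :: bit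
  let ?\<sigma> = "\<lambda>r :: 'k \<Rightarrow> bit. r(j := r j + (x + x'))"
  have "bij ?\<sigma>"
    by (rule o_bij[where g = ?\<sigma>]) (simp_all add: fun_eq_iff add.assoc)
  then show "\<exists>\<sigma>. bij \<sigma> \<and> (\<forall>r. cnf_share x (\<sigma> r) j = cnf_share x' r j)"
    using cnf_share_shift by blast
qed

lemma cnf_share_linear: "share_linear cnf_share"
  unfolding share_linear_def cnf_share_def cnf_add_shares_def
  by (simp add: fun_eq_iff sum.distrib add_ac)

definition cnf_eval :: "('l::finite \<Rightarrow> 'k) \<Rightarrow> 'k \<Rightarrow> ('l \<Rightarrow> 'k::finite \<Rightarrow> bit) \<Rightarrow> bit" where
  "cnf_eval e j s = (\<Sum>i\<in>UNIV. if e i = j then (\<Sum>t\<in>UNIV. s i t) else s i (e i))"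

definition cnf_rec :: "('l \<Rightarrow> 'k) \<Rightarrow> 'k \<Rightarrow> ('k \<Rightarrow> bit) \<Rightarrow> 'l \<Rightarrow> bit" where
  "cnf_rec e m y = (\<lambda>i. y (e i) + y m)"

lemma cnf_eval_cnf_share:
  "cnf_eval e j (\<lambda>i. cnf_share (x i) (\<rho> i) j)
     = (\<Sum>i\<in>UNIV. cnf_add_shares (x i) (\<rho> i) (e i)) + (\<Sum>i\<in>UNIV. if e i = j then x i else 0)"
  unfolding cnf_eval_def sum.distrib[symmetric]
proof (rule sum.cong)
  fix i
  show "(if e i = j then \<Sum>t\<in>UNIV. cnf_share (x i) (\<rho> i) j t else cnf_share (x i) (\<rho> i) j (e i))
      = cnf_add_shares (x i) (\<rho> i) (e i) + (if e i = j then x i else 0)"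
  proof (cases "e i = j")
    case True
    then show ?thesis
      by (simp add: sum_cnf_share add.commute)
  qed (simp add: cnf_share_def)
qed simp

lemma cnf_rec_correct:
  fixes e :: "'l::finite \<Rightarrow> 'k::finite"
  assumes "inj e" and "m \<notin> range e"
  shows "hss_correct cnf_share (cnf_eval e) (cnf_rec e m)"
  unfolding hss_correct_def
proof (intro allI)
  fix x :: "'l \<Rightarrow> bit" and \<rho> :: "'l \<Rightarrow> 'k \<Rightarrow> bit"
  have "(\<Sum>i\<in>UNIV. if e i = e i' then x i else 0) = x i'" for i'
    by (simp add: inj_eq[OF \<open>inj e\<close>])
  moreover have "(\<Sum>i\<in>UNIV. if e i = m then x i else 0) = 0"
    using \<open>m \<notin> range e\<close> by (intro sum.neutral) auto
  ultimately show "cnf_rec e m (\<lambda>j. cnf_eval e j (\<lambda>i. cnf_share (x i) (\<rho> i) j)) = x"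
    by (simp add: cnf_rec_def cnf_eval_cnf_share fun_eq_iff)
qed

lemma cnf_rec_linear: "rec_linear (cnf_rec e m)"
  by (simp add: rec_linear_def cnf_rec_def fun_eq_iff distrib_left add_ac)

theorem ex_lin_hss_cnf_share:
  assumes "CARD('l::finite) < CARD('k::finite)"
  shows "\<exists>(Eval :: 'k \<Rightarrow> ('l \<Rightarrow> 'k \<Rightarrow> bit) \<Rightarrow> bit) Rec. lin_hss cnf_share Eval Rec"
proof -
  obtain e :: "'l \<Rightarrow> 'k" where "inj e"
    using card_le_inj[of "UNIV :: 'l set" "UNIV :: 'k set"] assms by auto
  moreover have "range e \<noteq> UNIV"
    using assms card_image[OF \<open>inj e\<close>] by (metis less_irrefl)
  then obtain m where "m \<notin> range e"
    by blast
  ultimately have "lin_hss cnf_share (cnf_eval e) (cnf_rec e m)"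
    by (simp add: lin_hss_def cnf_share_private cnf_share_linear cnf_rec_linear cnf_rec_correct)
  then show ?thesis
    by blast
qed

locale affine_output_decoder =
  fixes Rec :: "('k::finite \<Rightarrow> bit) \<Rightarrow> 'l::finite \<Rightarrow> bit"
    and G :: "'k \<Rightarrow> ('l \<Rightarrow> 'e::{field,finite}) \<Rightarrow> bit"
    and \<delta> :: "'k \<Rightarrow> 'e"
  assumes additive_Rec: "additive Rec"
    and Rec_output_bits: "\<And>x b. Rec (\<lambda>j. G j (\<lambda>i. b i + \<delta> j * of_bit (x i))) = x"
    and card_servers: "CARD('k) = CARD('l) + 1"
begin

definition outputs :: "('l \<Rightarrow> bit) \<Rightarrow> ('l \<Rightarrow> 'e) \<Rightarrow> 'k \<Rightarrow> bit" where
  "outputs x b = (\<lambda>j. G j (\<lambda>i. b i + \<delta> j * of_bit (x i)))"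

lemma Rec_outputs [simp]: "Rec (outputs x b) = x"
  using Rec_output_bits by (simp add: outputs_def)

lemma outputs_zero: "outputs 0 c j = G j c"
  by (simp add: outputs_def)

lemma card_kernel: "card {w. Rec w = 0} = 2"
proof -
  have "CARD('k \<Rightarrow> bit) = CARD('l \<Rightarrow> bit) * card {w. Rec w = 0}"
    by (rule card_eq_card_mult_card_kernel[where s = "\<lambda>x. outputs x 0"]) (simp_all add: additive_Rec)
  then show ?thesis
    by (simp add: card_fun card_servers)
qed

lemma kernel_decomposition:
  obtains x k where "Rec k = 0" and "w = outputs x 0 + k"
proof
  show "Rec (w - outputs (Rec w) 0) = 0"
    by (simp add: additive.diff[OF additive_Rec])
qed simp

lemma kernel_eq: "{w. Rec w = 0} = {0, 1}"
proof -
  obtain d where "d \<noteq> 0" and ker: "{w. Rec w = 0} = {0, d}"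
  proof -
    obtain a b where ab: "{w. Rec w = 0} = {a, b}" "a \<noteq> b"
      using card_kernel by (auto simp: card_2_iff)
    have "0 \<in> {a, b}"
      unfolding ab(1)[symmetric] by (simp add: additive.zero[OF additive_Rec])
    then have "a = 0 \<or> b = 0"
      by auto
    then show ?thesis
    proof
      assume "a = 0"
      with ab show ?thesis
        using that[of b] by simp
    next
      assume "b = 0"
      with ab show ?thesis
        using that[of a] by (simp add: insert_commute)
    qed
  qed
  have "d j = 1" for j
  proof (rule ccontr)
    assume "d j \<noteq> 1"
    then have "d j = 0"
      by simp
    have vanish: "w j = 0" if "Rec w = 0" for w
    proof -
      have "w = 0 \<or> w = d"
        using ker that by blast
      with \<open>d j = 0\<close> show ?thesis
        by auto
    qed
    have G_const: "G j c = G j 0" for c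
    proof -
      have "Rec (outputs 0 c - outputs 0 0) = 0"
        by (simp add: additive.diff[OF additive_Rec])
      then have "(outputs 0 c - outputs 0 0) j = 0"
        by (rule vanish)
      then show ?thesis
        by (simp add: outputs_zero)
    qed
    have "w j = G j 0" for w
    proof -
      obtain x k where "Rec k = 0" and "w = outputs x 0 + k"
        by (rule kernel_decomposition)
      moreover have "outputs x 0 j = G j 0"
        unfolding outputs_def by (rule G_const)
      ultimately show ?thesis
        using vanish[OF \<open>Rec k = 0\<close>] by simp
    qed
    from this[of "\<lambda>_. G j 0 + 1"] show False
      by simp
  qed
  then have "d = 1"
    by (simp add: fun_eq_iff)
  with ker show ?thesis
    by simp
qed

lemma kernel_const:
  assumes "Rec w = 0"
  shows "w j = w k"
proof -
  have "w = 0 \<or> w = 1"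
    using assms kernel_eq by blast
  then show ?thesis
    by auto
qed

lemma G_eq: "G j = G k"
proof
  fix c
  have "outputs 0 c j = outputs 0 c k"
    by (rule kernel_const) (rule Rec_outputs)
  then show "G j c = G k c"
    by (simp add: outputs_zero)
qed

lemma output_pair_sum: "outputs x b j + outputs x b k = outputs x 0 j + outputs x 0 k"
proof -
  have "Rec (outputs x b - outputs x 0) = 0"
    by (simp add: additive.diff[OF additive_Rec])
  then have "(outputs x b - outputs x 0) j = (outputs x b - outputs x 0) k"
    by (rule kernel_const)
  then show ?thesis
    by (simp add: bit_add_eq_iff add_ac)
qed

lemma G_shift:
  "G j0 (\<lambda>i. c i + (\<delta> j - \<delta> j0) * of_bit (x i)) = G j0 c + (outputs x 0 j + outputs x 0 j0)"
proof -
  define b where "b i = c i - \<delta> j0 * of_bit (x i)" for i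
  have "outputs x b j = G j0 (\<lambda>i. c i + (\<delta> j - \<delta> j0) * of_bit (x i))"
    by (simp add: outputs_def b_def G_eq[of j j0] algebra_simps)
  moreover have "outputs x b j0 = G j0 c"
    by (simp add: outputs_def b_def)
  ultimately show ?thesis
    using output_pair_sum[of x b j j0] by (simp add: bit_add_eq_iff)
qed

lemma G_shift_sum:
  assumes "finite T"
  shows "G j0 (\<lambda>i. c i + (\<Sum>j\<in>T. \<delta> j - \<delta> j0) * of_bit (x i))
    = G j0 c + (\<Sum>j\<in>T. outputs x 0 j + outputs x 0 j0)"
  using assms
proof (induction T arbitrary: c rule: finite_induct)
  case (insert t T)
  have "G j0 (\<lambda>i. c i + (\<Sum>j\<in>insert t T. \<delta> j - \<delta> j0) * of_bit (x i))
      = G j0 (\<lambda>i. (c i + (\<delta> t - \<delta> j0) * of_bit (x i)) + (\<Sum>j\<in>T. \<delta> j - \<delta> j0) * of_bit (x i))"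
    using insert.hyps by (simp add: algebra_simps)
  also have "\<dots> = G j0 c + (outputs x 0 t + outputs x 0 j0) + (\<Sum>j\<in>T. outputs x 0 j + outputs x 0 j0)"
    by (simp only: insert.IH) (simp only: G_shift)
  finally show ?case
    by (simp only: sum.insert[OF insert.hyps] add_ac)
qed simp

theorem card_field_ge: "2 ^ CARD('l) \<le> CARD('e)"
proof (rule ccontr)
  assume "\<not> 2 ^ CARD('l) \<le> CARD('e)"
  fix j0 :: 'k
  have "CARD('e) < 2 ^ card (UNIV - {j0})"
    using \<open>\<not> 2 ^ CARD('l) \<le> CARD('e)\<close> card_servers by simp
  then obtain T T' where T: "T \<subseteq> UNIV - {j0}" and T': "T' \<subseteq> UNIV - {j0}" and "T \<noteq> T'"
    and sums: "(\<Sum>j\<in>T. \<delta> j - \<delta> j0) = (\<Sum>j\<in>T'. \<delta> j - \<delta> j0)"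
    by (rule subset_sums_collide[OF finite])
  define \<phi> where "\<phi> w = (\<Sum>j\<in>T. w j + w j0) + (\<Sum>j\<in>T'. w j + w j0)" for w :: "'k \<Rightarrow> bit"
  have "additive \<phi>"
    by unfold_locales (simp add: \<phi>_def sum.distrib add_ac)
  have "\<phi> (outputs x 0) = 0" for x
    using G_shift_sum[of T j0 0 x] G_shift_sum[of T' j0 0 x] sums by (simp add: \<phi>_def)
  moreover have "\<phi> k = 0" if "Rec k = 0" for k
  proof -
    have "k j + k j0 = 0" for j
      using kernel_const[OF that] by simp
    then show ?thesis
      by (simp only: \<phi>_def sum.neutral_const add_0)
  qed
  ultimately have \<phi>_zero: "\<phi> w = 0" for w
    by (metis kernel_decomposition additive.add[OF \<open>additive \<phi>\<close>])
  obtain j where "(j \<in> T) \<noteq> (j \<in> T')"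
    using \<open>T \<noteq> T'\<close> by blast
  with T T' have "\<phi> (\<lambda>k. if k = j then 1 else 0) = 1"
    by (cases "j \<in> T") (auto simp: \<phi>_def)
  with \<phi>_zero show False
    by simp
qed

end

theorem no_lin_hss_shamir_share:
  fixes \<alpha>0 :: "'e::{field,finite}" and \<alpha> :: "'k::finite \<Rightarrow> 'e"
    and Eval :: "'k \<Rightarrow> ('l::finite \<Rightarrow> 'e) \<Rightarrow> bit" and Rec :: "('k \<Rightarrow> bit) \<Rightarrow> 'l \<Rightarrow> bit"
  assumes "CARD('k) = CARD('l) + 1" and "CARD('e) < 2 ^ CARD('l)" and "\<alpha>0 \<notin> range \<alpha>"
  shows "\<not> lin_hss (shamir_share \<alpha>0 \<alpha>) Eval Rec"
proof
  assume hss: "lin_hss (shamir_share \<alpha>0 \<alpha>) Eval Rec"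
  have rescale: "(b + inverse (\<alpha> j - \<alpha>0) * of_bit x) * (\<alpha> j - \<alpha>0) = shamir_share \<alpha>0 \<alpha> x b j"
    for b x j
  proof -
    have "\<alpha> j - \<alpha>0 \<noteq> 0"
      using \<open>\<alpha>0 \<notin> range \<alpha>\<close> by auto
    then show ?thesis
      by (simp add: shamir_share_def field_simps)
  qed
  have "additive Rec"
    using hss by (simp add: lin_hss_def rec_linear_def additive_def)
  moreover have "Rec (\<lambda>j. Eval j (\<lambda>i. (b i + inverse (\<alpha> j - \<alpha>0) * of_bit (x i)) * (\<alpha> j - \<alpha>0))) = x"
    for x b
    using hss by (simp only: rescale lin_hss_def hss_correct_def)
  ultimately interpret affine_output_decoder Rec "\<lambda>j c. Eval j (\<lambda>i. c i * (\<alpha> j - \<alpha>0))"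
      "\<lambda>j. inverse (\<alpha> j - \<alpha>0)"
    using assms(1) by (rule affine_output_decoder.intro)
  show False
    using card_field_ge assms(2) by simp
qed

theorem mainTheorem19:
  shows "(\<exists>(Eval :: 5 \<Rightarrow> (4 \<Rightarrow> (5 \<Rightarrow> bit)) \<Rightarrow> bit) (Rec :: (5 \<Rightarrow> bit) \<Rightarrow> (4 \<Rightarrow> bit)).
            lin_hss (cnf_share :: bit \<Rightarrow> (5 \<Rightarrow> bit) \<Rightarrow> 5 \<Rightarrow> (5 \<Rightarrow> bit)) Eval Rec)
       \<and> (\<forall>(\<alpha>0 :: 'e::{field,finite}) (\<alpha> :: 5 \<Rightarrow> 'e).
            CARD('e) = 8 \<longrightarrow> inj \<alpha> \<longrightarrow> \<alpha>0 \<notin> range \<alpha> \<longrightarrow>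
            \<not> (\<exists>(Eval :: 5 \<Rightarrow> (4 \<Rightarrow> 'e) \<Rightarrow> bit) (Rec :: (5 \<Rightarrow> bit) \<Rightarrow> (4 \<Rightarrow> bit)).
                 lin_hss (shamir_share \<alpha>0 \<alpha>) Eval Rec))"
proof
  show "\<exists>(Eval :: 5 \<Rightarrow> (4 \<Rightarrow> (5 \<Rightarrow> bit)) \<Rightarrow> bit) Rec. lin_hss cnf_share Eval Rec"
    by (rule ex_lin_hss_cnf_share) simp
  show "\<forall>(\<alpha>0 :: 'e) (\<alpha> :: 5 \<Rightarrow> 'e). CARD('e) = 8 \<longrightarrow> inj \<alpha> \<longrightarrow> \<alpha>0 \<notin> range \<alpha> \<longrightarrow>
      \<not> (\<exists>(Eval :: 5 \<Rightarrow> (4 \<Rightarrow> 'e) \<Rightarrow> bit) Rec. lin_hss (shamir_share \<alpha>0 \<alpha>) Eval Rec)"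
    using no_lin_hss_shamir_share[where 'k = 5 and 'l = 4 and 'e = 'e] by simp
qed

end
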